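(* Let $d\ge 2$ and let $a_1,a_2,b_1,b_2$ be integers with $0<a_1<b_1\le d$, $0<a_2<b_2\leq d$, $a_1\leq a_2$, $b_1\leq b_2$, and $(a_1,b_1)\neq(a_2,b_2)$. Then $\ell_d^{(a_1,b_1)}(n)\geq \ell_d^{(a_2,b_2)}(n)$ for all $n\geq 1$, and $$\lim_{n\to\infty}\left(\ell_d^{(a_1,b_1)}(n)-\ell_d^{(a_2,b_2)}(n)\right)=+\infty.$$
   Context: A partition is a finite nonincreasing sequence of positive integers (its parts); its size is not fixed. The perimeter of a partition with largest part $\alpha$ and $\lambda$ parts is $\alpha+\lambda-1$. For $0<a<b\le d$, $\ell_d^{(a,b)}(n)$ is the number of partitions of perimeter $n$ all of whose parts are congruent to $a$ or $b$ modulo $d$. *)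

theory Defs
  imports Main
begin

definition is_partition :: "nat list \<Rightarrow> bool" where
  "is_partition xs \<longleftrightarrow> sorted_wrt (\<ge>) xs \<and> (\<forall>x\<in>set xs. 0 < x)"

text \<open>Perimeter: largest part plus number of parts minus one (the empty
partition gets perimeter -1, so it is never counted for n \<ge> 1).\<close>
definition perimeter :: "nat list \<Rightarrow> int" where
  "perimeter xs = int (if xs = [] then 0 else Max (set xs)) + int (length xs) - 1"

definition ell :: "nat \<Rightarrow> nat \<Rightarrow> nat \<Rightarrow> nat \<Rightarrow> nat" where
  "ell d a b n = card {xs. is_partition xs \<and> perimeter xs = int n \<and>
      (\<forall>x\<in>set xs. x mod d = a mod d \<or> x mod d = b mod d)}"

end

theory Submission
  imports Defs
begin

text \<open>The positive integers congruent to \<open>a\<close> or \<open>b\<close> modulo \<open>d\<close> are, in increasing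
  order, \<open>a, b, a + d, b + d, \<dots>\<close>; since \<open>a\<^sub>1 \<le> a\<^sub>2\<close> and \<open>b\<^sub>1 \<le> b\<^sub>2\<close>, the \<open>k\<close>-th
  allowed part for \<open>(a\<^sub>2, b\<^sub>2)\<close> is at least the \<open>k\<close>-th one for \<open>(a\<^sub>1, b\<^sub>1)\<close>.
  Replacing every part of a partition by its counterpart keeps it nonincreasing and
  lowers the largest part by some \<open>\<delta>\<close>; appending \<open>\<delta>\<close> copies of the smallest part \<open>a\<^sub>1\<close>
  restores the perimeter. This map is injective, which gives the inequality.
  As \<open>(a\<^sub>1, b\<^sub>1) \<noteq> (a\<^sub>2, b\<^sub>2)\<close>, some counterpart \<open>t\<close> of \<open>a\<^sub>2 + d\<close> or \<open>b\<^sub>2 + d\<close> is strictly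
  smaller than it; the \<open>n + 1 - t\<close> partitions of perimeter \<open>n\<close> made of copies of \<open>t\<close>
  and \<open>b\<^sub>1\<close> have largest part \<open>t\<close> but no part \<open>a\<^sub>1\<close>, so they are missed by the map.\<close>

definition partitions_with_parts :: "nat set \<Rightarrow> nat \<Rightarrow> nat list set" where
  "partitions_with_parts A n = {xs. is_partition xs \<and> perimeter xs = int n \<and> set xs \<subseteq> A}"

lemma partitions_with_parts_nonempty: "xs \<in> partitions_with_parts A n \<Longrightarrow> xs \<noteq> []"
  unfolding partitions_with_parts_def perimeter_def by auto

lemma finite_partitions_with_parts: "finite (partitions_with_parts A n)"
proof (rule finite_subset)
  show "partitions_with_parts A n \<subseteq> {xs. set xs \<subseteq> {0..n} \<and> length xs \<le> n + 1}"
  proof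
    fix xs assume xs: "xs \<in> partitions_with_parts A n"
    then have "xs \<noteq> []" by (rule partitions_with_parts_nonempty)
    with xs have "int (Max (set xs)) + int (length xs) = int n + 1"
      unfolding partitions_with_parts_def perimeter_def by simp
    moreover have "length xs \<ge> 1" using \<open>xs \<noteq> []\<close> by (cases xs) auto
    ultimately have "Max (set xs) \<le> n" "length xs \<le> n + 1" by linarith+
    then show "xs \<in> {xs. set xs \<subseteq> {0..n} \<and> length xs \<le> n + 1}"
      by (auto dest: Max_ge[OF finite_set])
  qed
  show "finite {xs. set xs \<subseteq> {0..n} \<and> length xs \<le> n + 1}"
    by (rule finite_lists_length_le) simp
qed

lemma sorted_wrt_replicate: "reflp R \<Longrightarrow> sorted_wrt R (replicate k x)"
  by (induction k) (auto dest: reflpD)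

definition shrink_pad :: "(nat \<Rightarrow> nat) \<Rightarrow> nat \<Rightarrow> nat list \<Rightarrow> nat list" where
  "shrink_pad \<phi> c xs = map \<phi> xs @ replicate (Max (set xs) - \<phi> (Max (set xs))) c"

locale shrinking_map =
  fixes A B :: "nat set" and \<phi> :: "nat \<Rightarrow> nat" and c :: nat
  assumes strict_mono: "strict_mono_on A \<phi>"
    and maps_to: "x \<in> A \<Longrightarrow> \<phi> x \<in> B"
    and c_le: "x \<in> A \<Longrightarrow> c \<le> \<phi> x"
    and shrinks: "x \<in> A \<Longrightarrow> \<phi> x \<le> x"
    and c_mem: "c \<in> B" and c_pos: "0 < c"
begin

lemma shrink_pad_props:
  assumes xs: "xs \<in> partitions_with_parts A n"
  shows "shrink_pad \<phi> c xs \<in> partitions_with_parts B n"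
    and "Max (set (shrink_pad \<phi> c xs)) = \<phi> (Max (set xs))"
proof -
  define M where "M = Max (set xs)"
  have ne: "xs \<noteq> []" using xs by (rule partitions_with_parts_nonempty)
  have sorted: "sorted_wrt (\<ge>) xs" and sub: "set xs \<subseteq> A" and per: "perimeter xs = int n"
    using xs unfolding partitions_with_parts_def is_partition_def by auto
  have M: "M \<in> A" "\<forall>x\<in>set xs. x \<le> M" using ne sub unfolding M_def by auto
  have mono: "\<phi> x \<le> \<phi> y" if "x \<in> A" "y \<in> A" "x \<le> y" for x y
    using strict_mono_on_imp_mono_on[OF strict_mono] that by (simp add: mono_onD)
  have set_pad: "set (shrink_pad \<phi> c xs) \<subseteq> \<phi> ` set xs \<union> {c}"
    unfolding shrink_pad_def by auto
  have max_pad: "Max (set (shrink_pad \<phi> c xs)) = \<phi> M"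
  proof (rule Max_eqI)
    show "y \<le> \<phi> M" if "y \<in> set (shrink_pad \<phi> c xs)" for y
    proof -
      from that set_pad consider "y = c" | x where "x \<in> set xs" "y = \<phi> x" by auto
      then show ?thesis using M sub mono c_le[OF \<open>M \<in> A\<close>] by cases auto
    qed
    show "\<phi> M \<in> set (shrink_pad \<phi> c xs)"
      using ne unfolding shrink_pad_def M_def by simp
  qed simp
  then show "Max (set (shrink_pad \<phi> c xs)) = \<phi> (Max (set xs))" unfolding M_def .
  have "sorted_wrt (\<lambda>x y. \<phi> y \<le> \<phi> x) xs"
    by (rule sorted_wrt_mono_rel[OF _ sorted]) (use sub mono in blast)
  then have "sorted_wrt (\<ge>) (shrink_pad \<phi> c xs)"
    unfolding shrink_pad_def sorted_wrt_append sorted_wrt_map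
    using sub c_le by (auto simp: sorted_wrt_iff_nth_less)
  moreover have "perimeter (shrink_pad \<phi> c xs) = int n"
    using per ne shrinks[OF \<open>M \<in> A\<close>] max_pad
    unfolding perimeter_def shrink_pad_def M_def by auto
  moreover have "\<forall>x\<in>set (shrink_pad \<phi> c xs). 0 < x \<and> x \<in> B"
    using set_pad sub c_le c_pos c_mem maps_to by fastforce
  ultimately show "shrink_pad \<phi> c xs \<in> partitions_with_parts B n"
    unfolding partitions_with_parts_def is_partition_def by auto
qed

lemma inj_on_shrink_pad: "inj_on (shrink_pad \<phi> c) (partitions_with_parts A n)"
proof (rule inj_onI)
  fix xs ys
  assume xs: "xs \<in> partitions_with_parts A n" and ys: "ys \<in> partitions_with_parts A n"
    and eq: "shrink_pad \<phi> c xs = shrink_pad \<phi> c ys"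
  have sub: "set xs \<subseteq> A" "set ys \<subseteq> A"
    using xs ys unfolding partitions_with_parts_def by auto
  have "Max (set xs) \<in> A" "Max (set ys) \<in> A"
    using sub partitions_with_parts_nonempty[OF xs] partitions_with_parts_nonempty[OF ys] by auto
  moreover have "\<phi> (Max (set xs)) = \<phi> (Max (set ys))"
    using eq shrink_pad_props(2)[OF xs] shrink_pad_props(2)[OF ys] by simp
  ultimately have "Max (set xs) = Max (set ys)"
    using strict_mono_on_imp_inj_on[OF strict_mono] by (auto dest: inj_onD)
  with eq have "map \<phi> xs = map \<phi> ys" unfolding shrink_pad_def by simp
  then show "xs = ys"
    using map_inj_on inj_on_subset[OF strict_mono_on_imp_inj_on[OF strict_mono]] sub
    by (metis le_sup_iff set_append)
qed

lemma card_partitions_le: "card (partitions_with_parts A n) \<le> card (partitions_with_parts B n)"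
  using card_inj_on_le[OF inj_on_shrink_pad _ finite_partitions_with_parts] shrink_pad_props(1)
  by blast

lemma card_partitions_gap:
  assumes "t \<in> B" "v \<in> B" "c < v" "v < t" "t \<le> n"
    and grows: "\<And>x. x \<in> A \<Longrightarrow> \<phi> x = t \<Longrightarrow> t < x"
  shows "card (partitions_with_parts A n) + (n + 1 - t) \<le> card (partitions_with_parts B n)"
proof -
  define L where "L = n + 1 - t"
  define g where "g i = replicate (Suc i) t @ replicate (L - Suc i) v" for i
  have g_in: "g i \<in> partitions_with_parts B n" and g_max: "Max (set (g i)) = t"
    and g_no_c: "c \<notin> set (g i)" if "i < L" for i
  proof -
    have set_g: "set (g i) \<subseteq> {t, v}" "t \<in> set (g i)" unfolding g_def by auto
    then show max: "Max (set (g i)) = t"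
      using \<open>v < t\<close> by (intro Max_eqI) auto
    show "c \<notin> set (g i)" using set_g assms by auto
    have "length (g i) = L" unfolding g_def using that by simp
    then have "perimeter (g i) = int n"
      unfolding perimeter_def max L_def using \<open>t \<le> n\<close> set_g by auto
    moreover have "sorted_wrt (\<ge>) (g i)"
      unfolding g_def using \<open>v < t\<close> by (auto simp: sorted_wrt_append sorted_wrt_replicate)
    ultimately show "g i \<in> partitions_with_parts B n"
      using set_g assms unfolding partitions_with_parts_def is_partition_def by auto
  qed
  have "count_list (g i) t = Suc i" for i
    using \<open>v < t\<close> by (simp add: g_def count_list_eq_length_filter filter_replicate)
  then have "inj_on g {..<L}"
    by (intro inj_onI) (metis Suc_inject)
  have disjoint: "shrink_pad \<phi> c ` partitions_with_parts A n \<inter> g ` {..<L} = {}"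
  proof (rule ccontr)
    assume "\<not> ?thesis"
    then obtain xs i where xs: "xs \<in> partitions_with_parts A n" and "i < L"
      and eq: "shrink_pad \<phi> c xs = g i" by auto
    define M where "M = Max (set xs)"
    have "M \<in> A"
      using xs partitions_with_parts_nonempty[OF xs] unfolding partitions_with_parts_def M_def
      by auto
    moreover have "\<phi> M = t" using shrink_pad_props(2)[OF xs] g_max[OF \<open>i < L\<close>] eq M_def by simp
    ultimately have "\<phi> M < M" using grows by simp
    then have "c \<in> set (shrink_pad \<phi> c xs)" unfolding shrink_pad_def M_def by simp
    with eq g_no_c[OF \<open>i < L\<close>] show False by simp
  qed
  have "card (partitions_with_parts A n) + L
      = card (shrink_pad \<phi> c ` partitions_with_parts A n \<union> g ` {..<L})"
    using disjoint inj_on_shrink_pad \<open>inj_on g {..<L}\<close> finite_partitions_with_parts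
    by (simp add: card_Un_disjoint card_image)
  also have "\<dots> \<le> card (partitions_with_parts B n)"
    using shrink_pad_props(1) g_in by (intro card_mono[OF finite_partitions_with_parts]) auto
  finally show ?thesis unfolding L_def .
qed

lemma card_partitions_diff_tendsto_top:
  assumes "t \<in> B" "v \<in> B" "c < v" "v < t"
    and "\<And>x. x \<in> A \<Longrightarrow> \<phi> x = t \<Longrightarrow> t < x"
  shows "filterlim (\<lambda>n. int (card (partitions_with_parts B n)) - int (card (partitions_with_parts A n)))
           at_top sequentially"
  unfolding filterlim_at_top eventually_sequentially
proof
  fix Z :: int
  have "Z \<le> int (card (partitions_with_parts B n)) - int (card (partitions_with_parts A n))"
    if "nat Z + t \<le> n" for n
    using card_partitions_gap[OF assms(1-4) _ assms(5), of n] that by linarith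
  then show "\<exists>N. \<forall>n\<ge>N. Z \<le> int (card (partitions_with_parts B n))
      - int (card (partitions_with_parts A n))" by blast
qed

end

definition two_residue_enum :: "nat \<Rightarrow> nat \<Rightarrow> nat \<Rightarrow> nat \<Rightarrow> nat" where
  "two_residue_enum d a b k = (if even k then a else b) + d * (k div 2)"

lemma strict_mono_two_residue_enum:
  assumes "a < b" "b < a + d"
  shows "strict_mono (two_residue_enum d a b)"
proof (rule strict_mono_Suc_iff[THEN iffD2], rule allI)
  fix k
  show "two_residue_enum d a b k < two_residue_enum d a b (Suc k)"
    using assms by (cases "even k") (auto simp: two_residue_enum_def elim!: evenE oddE)
qed

lemma residue_eq_add_mult:
  fixes x c d :: nat
  assumes "x mod d = c mod d" "0 < c" "c \<le> d" "0 < x"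
  obtains q where "x = c + d * q"
proof -
  have "c \<le> x"
  proof (cases "c = d")
    case True
    with assms show ?thesis by (auto dest: dvd_imp_le simp: mod_eq_0_iff_dvd)
  next
    case False
    with assms show ?thesis by (metis le_neq_implies_less mod_less mod_less_eq_dividend)
  qed
  with assms(1) have "d dvd x - c" by (simp add: mod_eq_dvd_iff_nat)
  with \<open>c \<le> x\<close> show ?thesis using that by (metis dvd_def le_add_diff_inverse)
qed

lemma range_two_residue_enum:
  assumes "0 < a" "a < b" "b \<le> d"
  shows "range (two_residue_enum d a b) = {x. 0 < x \<and> (x mod d = a mod d \<or> x mod d = b mod d)}"
proof (intro equalityI subsetI)
  fix x assume "x \<in> range (two_residue_enum d a b)"
  then show "x \<in> {x. 0 < x \<and> (x mod d = a mod d \<or> x mod d = b mod d)}"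
    using assms by (auto simp: two_residue_enum_def)
next
  fix x assume "x \<in> {x. 0 < x \<and> (x mod d = a mod d \<or> x mod d = b mod d)}"
  then have "0 < x" and "x mod d = a mod d \<or> x mod d = b mod d" by auto
  then consider "x mod d = a mod d" | "x mod d = b mod d" by blast
  then show "x \<in> range (two_residue_enum d a b)"
  proof cases
    case 1
    then obtain q where "x = a + d * q"
      using residue_eq_add_mult[of x d a] assms \<open>0 < x\<close> by auto
    then have "x = two_residue_enum d a b (2 * q)" by (simp add: two_residue_enum_def)
    then show ?thesis by simp
  next
    case 2
    then obtain q where "x = b + d * q"
      using residue_eq_add_mult[of x d b] assms \<open>0 < x\<close> by auto
    then have "x = two_residue_enum d a b (2 * q + 1)" by (simp add: two_residue_enum_def)
    then show ?thesis by simp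
  qed
qed

lemma ell_eq_card_partitions_with_parts:
  assumes "0 < a" "a < b" "b \<le> d"
  shows "ell d a b n = card (partitions_with_parts (range (two_residue_enum d a b)) n)"
  unfolding ell_def partitions_with_parts_def range_two_residue_enum[OF assms] is_partition_def
  by (rule arg_cong[where f = card]) auto

lemma two_residue_enum_le:
  "a1 \<le> a2 \<Longrightarrow> b1 \<le> b2 \<Longrightarrow> two_residue_enum d a1 b1 k \<le> two_residue_enum d a2 b2 k"
  by (simp add: two_residue_enum_def)

lemma shrinking_map_two_residue_enum:
  assumes "0 < a1" "a1 < b1" "b1 \<le> d" "a2 < b2" "b2 \<le> d" "a1 \<le> a2" "b1 \<le> b2"
  defines "e1 \<equiv> two_residue_enum d a1 b1" and "e2 \<equiv> two_residue_enum d a2 b2"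
  shows "shrinking_map (range e2) (range e1) (e1 \<circ> inv e2) a1"
proof
  have "strict_mono e1" "strict_mono e2"
    unfolding e1_def e2_def using assms(1-7) strict_mono_two_residue_enum by auto
  then have inv_e2: "inv e2 (e2 k) = k" for k
    by (simp add: strict_mono_imp_inj_on)
  have "e1 0 = a1" by (simp add: e1_def two_residue_enum_def)
  show "strict_mono_on (range e2) (e1 \<circ> inv e2)"
    using \<open>strict_mono e1\<close> \<open>strict_mono e2\<close>
    by (auto intro!: strict_mono_onI simp: inv_e2 strict_mono_less)
  show "(e1 \<circ> inv e2) x \<in> range e1" for x by simp
  show "a1 \<le> (e1 \<circ> inv e2) x" for x
    using \<open>strict_mono e1\<close> \<open>e1 0 = a1\<close> by (metis comp_apply le0 strict_mono_less_eq)
  show "(e1 \<circ> inv e2) x \<le> x" if "x \<in> range e2" for x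
  proof -
    from that obtain k where "x = e2 k" by blast
    then show ?thesis
      using two_residue_enum_le[OF assms(6,7)] by (simp add: inv_e2) (simp add: e1_def e2_def)
  qed
  show "a1 \<in> range e1" using \<open>e1 0 = a1\<close> by (metis rangeI)
  show "0 < a1" by fact
qed


lemma two_residue_enum_gap:
  assumes "0 < a1" "a1 < b1" "b1 \<le> d" "a2 < b2" "b2 \<le> d" "a1 \<le> a2" "b1 \<le> b2"
    and "(a1, b1) \<noteq> (a2, b2)"
  defines "e1 \<equiv> two_residue_enum d a1 b1" and "e2 \<equiv> two_residue_enum d a2 b2"
  obtains t v where "t \<in> range e1" "v \<in> range e1" "a1 < v" "v < t"
    and "\<And>x. x \<in> range e2 \<Longrightarrow> (e1 \<circ> inv e2) x = t \<Longrightarrow> t < x"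
proof -
  have "strict_mono e1" "strict_mono e2"
    unfolding e1_def e2_def using assms(1-7) strict_mono_two_residue_enum by auto
  obtain j where "2 \<le> j" "e1 j < e2 j"
  proof (cases "a1 < a2")
    case True
    then show ?thesis using that[of 2] by (simp add: e1_def e2_def two_residue_enum_def)
  next
    case False
    with assms(6-8) have "b1 < b2" by auto
    then show ?thesis using that[of 3] by (simp add: e1_def e2_def two_residue_enum_def)
  qed
  show ?thesis
  proof (rule that[of "e1 j" "e1 1"])
    show "a1 < e1 1" using \<open>a1 < b1\<close> by (simp add: e1_def two_residue_enum_def)
    show "e1 1 < e1 j" using \<open>strict_mono e1\<close> \<open>2 \<le> j\<close> by (simp add: strict_mono_less)
    fix x assume "x \<in> range e2" "(e1 \<circ> inv e2) x = e1 j"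
    then obtain k where "x = e2 k" "e1 k = e1 j"
      using \<open>strict_mono e2\<close> by (auto simp: strict_mono_imp_inj_on)
    then show "e1 j < x"
      using \<open>strict_mono e1\<close> \<open>e1 j < e2 j\<close> by (simp add: strict_mono_eq)
  qed simp_all
qed

theorem proposition1p4:
  fixes d a1 a2 b1 b2 :: nat
  assumes "d \<ge> 2"
    and "0 < a1" "a1 < b1" "b1 \<le> d"
    and "0 < a2" "a2 < b2" "b2 \<le> d"
    and "a1 \<le> a2" "b1 \<le> b2" "(a1, b1) \<noteq> (a2, b2)"
  shows "(\<forall>n\<ge>1. ell d a1 b1 n \<ge> ell d a2 b2 n) \<and>
         filterlim (\<lambda>n. int (ell d a1 b1 n) - int (ell d a2 b2 n)) at_top sequentially"
proof -
  define e1 where "e1 = two_residue_enum d a1 b1"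
  define e2 where "e2 = two_residue_enum d a2 b2"
  interpret shrinking_map "range e2" "range e1" "e1 \<circ> inv e2" a1
    unfolding e1_def e2_def using assms by (intro shrinking_map_two_residue_enum) auto
  have ell: "ell d a1 b1 n = card (partitions_with_parts (range e1) n)"
    "ell d a2 b2 n = card (partitions_with_parts (range e2) n)" for n
    unfolding e1_def e2_def using assms by (auto intro: ell_eq_card_partitions_with_parts)
  obtain t v where "t \<in> range e1" "v \<in> range e1" "a1 < v" "v < t"
    and "\<And>x. x \<in> range e2 \<Longrightarrow> (e1 \<circ> inv e2) x = t \<Longrightarrow> t < x"
    using two_residue_enum_gap[of a1 b1 d a2 b2] assms unfolding e1_def e2_def by auto
  then have "filterlim (\<lambda>n. int (ell d a1 b1 n) - int (ell d a2 b2 n)) at_top sequentially"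
    unfolding ell by (rule card_partitions_diff_tendsto_top)
  then show ?thesis using card_partitions_le by (simp add: ell)
qed

end
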